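(* There is a universally obviously strategy-proof randomized mechanism for unknown single-minded bidders in a multi-unit auction that gives a $400$-approximation to the optimal social welfare.
   Context: A multi-unit auction has $m$ identical items; bidder $i$'s valuation is $v_i:\{0,1,\dots,m\}\to\mathbb{R}_{\ge0}$ (value for a number of items). A valuation is single-minded if there are $x_i\ge0$ and $d_i\in\{1,\dots,m\}$ with $v_i(q)=x_i$ for $q\ge d_i$ and $v_i(q)=0$ otherwise; "unknown single-minded" means both $x_i$ and $d_i$ are private (the domain is all single-minded valuations). Utilities are quasi-linear. A deterministic mechanism is a rooted tree: each internal node is assigned to one bidder, who sends one of the messages labeling the outgoing edges; each leaf is labeled with a feasible allocation (quantities summing to at most $m$) and payments. A behavior $B_i$ specifies a message at every node of bidder $i$; a profile $B$ determines a root-to-leaf path $\mathrm{Path}(B)$ with allocation $f_i(B)$ and payment $p_i(B)$ for $i$. A strategy $\mathcal S_i$ maps each valuation in the domain to a behavior; it is obviously dominant if for every $v_i$, every node $u$ of $i$, every $B_{-i}$ and every profile $B'$ with $u\in\mathrm{Path}(\mathcal S_i(v_i),B_{-i})\cap\mathrm{Path}(B')$ and $B'_i$ sending at $u$ a message different from $\mathcal S_i(v_i)$'s, $v_i(f_i(\mathcal S_i(v_i),B_{-i}))-p_i(\mathcal S_i(v_i),B_{-i})\ge v_i(f_i(B'))-p_i(B')$. A randomized mechanism (a distribution over deterministic mechanisms with strategies) is universally OSP if each mechanism in its support is OSP; it gives an $\alpha$-approximation if for every profile $\mathrm{OPT}\le\alpha\,\mathbb{E}[\text{welfare}]$ when bidders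 follow their strategies, $\mathrm{OPT}$ being the maximum of $\sum_iv_i(q_i)$ over $q_i\ge0$ integers with $\sum_iq_i\le m$. *)

theory Defs
  imports "HOL-Probability.Probability_Mass_Function" "HOL-Library.Sublist"
begin

(* Bidders are 0,...,n-1; items: m identical units. *)

type_synonym valuation = "nat \<Rightarrow> real"

definition single_minded :: "nat \<Rightarrow> valuation \<Rightarrow> bool" where
  "single_minded m v \<longleftrightarrow>
     (\<exists>x d. x \<ge> 0 \<and> 1 \<le> d \<and> d \<le> m \<and> (\<forall>q. v q = (if d \<le> q then x else 0)))"

(* A leaf carries an allocation and payments;
   an internal node is assigned to a bidder, has a set of admissible messages labelling
   its outgoing edges, and a child for each message. Trees may be infinitely branching
   but every root-to-leaf path is finite. *)
datatype 'm mech = Leaf "nat \<Rightarrow> nat" "nat \<Rightarrow> real" | Node nat "'m set" "'m \<Rightarrow> 'm mech"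

type_synonym msg = "real list"

(* nodes are identified by the history of messages leading to them from the root *)
fun subtree :: "'m mech \<Rightarrow> 'm list \<Rightarrow> 'm mech option" where
  "subtree T [] = Some T"
| "subtree (Leaf a p) (x # xs) = None"
| "subtree (Node i M ch) (x # xs) = (if x \<in> M then subtree (ch x) xs else None)"

type_synonym 'm behavior = "'m list \<Rightarrow> 'm"
type_synonym 'm profile = "nat \<Rightarrow> 'm behavior"
type_synonym 'm strategy = "valuation \<Rightarrow> 'm behavior"

primrec run :: "'m mech \<Rightarrow> 'm list \<Rightarrow> 'm profile \<Rightarrow> 'm list \<times> (nat \<Rightarrow> nat) \<times> (nat \<Rightarrow> real)" where
  "run (Leaf a p) h B = (h, a, p)"
| "run (Node i M ch) h B = run (ch (B i h)) (h @ [B i h]) B"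

definition alloc :: "'m mech \<Rightarrow> 'm profile \<Rightarrow> nat \<Rightarrow> nat" where
  "alloc T B = fst (snd (run T [] B))"

definition pay :: "'m mech \<Rightarrow> 'm profile \<Rightarrow> nat \<Rightarrow> real" where
  "pay T B = snd (snd (run T [] B))"

definition on_path :: "'m mech \<Rightarrow> 'm list \<Rightarrow> 'm profile \<Rightarrow> bool" where
  "on_path T h B \<longleftrightarrow> prefix h (fst (run T [] B))"

definition valid_behavior :: "'m mech \<Rightarrow> nat \<Rightarrow> 'm behavior \<Rightarrow> bool" where
  "valid_behavior T i b \<longleftrightarrow> (\<forall>h M ch. subtree T h = Some (Node i M ch) \<longrightarrow> b h \<in> M)"

definition well_formed :: "nat \<Rightarrow> nat \<Rightarrow> 'm mech \<Rightarrow> bool" where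
  "well_formed n m T \<longleftrightarrow>
     (\<forall>h i M ch. subtree T h = Some (Node i M ch) \<longrightarrow> i < n \<and> M \<noteq> {}) \<and>
     (\<forall>h a p. subtree T h = Some (Leaf a p) \<longrightarrow> (\<Sum>i<n. a i) \<le> m)"

definition det_mech :: "nat \<Rightarrow> nat \<Rightarrow> 'm mech \<Rightarrow> (nat \<Rightarrow> 'm strategy) \<Rightarrow> bool" where
  "det_mech n m T S \<longleftrightarrow> well_formed n m T \<and>
     (\<forall>i<n. \<forall>v. single_minded m v \<longrightarrow> valid_behavior T i (S i v))"

definition utility :: "valuation \<Rightarrow> 'm mech \<Rightarrow> 'm profile \<Rightarrow> nat \<Rightarrow> real" where
  "utility v T B i = v (alloc T B i) - pay T B i"

definition OSP :: "nat \<Rightarrow> nat \<Rightarrow> 'm mech \<Rightarrow> (nat \<Rightarrow> 'm strategy) \<Rightarrow> bool" where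
  "OSP n m T S \<longleftrightarrow>
     (\<forall>i<n. \<forall>v. single_minded m v \<longrightarrow>
        (\<forall>h M ch B B'. subtree T h = Some (Node i M ch) \<longrightarrow>
           (\<forall>j. valid_behavior T j (B j)) \<longrightarrow> (\<forall>j. valid_behavior T j (B' j)) \<longrightarrow>
           on_path T h (B(i := S i v)) \<longrightarrow> on_path T h B' \<longrightarrow>
           B' i h \<noteq> S i v h \<longrightarrow>
           utility v T B' i \<le> utility v T (B(i := S i v)) i))"

definition welfare :: "nat \<Rightarrow> 'm mech \<Rightarrow> (nat \<Rightarrow> 'm strategy) \<Rightarrow> (nat \<Rightarrow> valuation) \<Rightarrow> real" where
  "welfare n T S vs = (\<Sum>i<n. vs i (alloc T (\<lambda>j. S j (vs j)) i))"

definition opt_welfare :: "nat \<Rightarrow> nat \<Rightarrow> (nat \<Rightarrow> valuation) \<Rightarrow> real" where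
  "opt_welfare n m vs = Sup {(\<Sum>i<n. vs i (q i)) | q :: nat \<Rightarrow> nat. (\<Sum>i<n. q i) \<le> m}"

end

theory Submission
  imports Defs "HOL-Probability.Product_PMF"
begin

text \<open>Each bidder is independently a sample (\<open>c i = True\<close>) with probability \<open>9/10\<close>. Samples
  speak first and get nothing; their bids set the prices faced by the others. With probability
  \<open>1/2\<close> the mechanism is a sampled second-price auction (the first unsampled bidder whose bid
  beats all sampled bids gets the \<open>m\<close> units at the highest sampled bid), otherwise a sampled
  posted-price auction (unsampled bidders, in index order, get their demand at a per-unit price
  read off the sampled bids, provided their density reaches it and enough units remain).
  In both, every bidder speaks once and its outcome depends only on the messages of earlier
  speakers, so obvious strategy-proofness reduces to truthfulness against a posted price.

  For the welfare, the greedy fractional solution (bidders by decreasing value per unit) shows that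
  OPT is at most twice the value of the small bidders (demand at most \<open>m/2\<close>) of the greedy prefix
  plus three times the highest value. The second-price auction earns \<open>9/100\<close> of the highest value
  (the top bidder unsampled, the runner-up sampled), and the posted-price auction earns \<open>1/18\<close> of
  the value of every small greedy bidder, since the expected demand served before it is at most
  \<open>2m/9\<close>. So \<open>400\<close> times the expected welfare is at least \<open>18\<close> times the highest value plus
  \<open>100/9\<close> times the small greedy value.\<close>

section \<open>Sequential mechanisms\<close>

type_synonym outcome = "(nat \<Rightarrow> nat) \<times> (nat \<Rightarrow> real)"

definition same_outcome :: "outcome \<Rightarrow> outcome \<Rightarrow> nat \<Rightarrow> bool" where
  "same_outcome r r' i \<longleftrightarrow> fst r i = fst r' i \<and> snd r i = snd r' i"

definition outcome_utility :: "valuation \<Rightarrow> outcome \<Rightarrow> nat \<Rightarrow> real" where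
  "outcome_utility v r i = v (fst r i) - snd r i"

definition truthful :: "nat \<Rightarrow> (valuation \<Rightarrow> 'm) \<Rightarrow> ((nat \<Rightarrow> 'm) \<Rightarrow> outcome) \<Rightarrow> bool" where
  "truthful m e out \<longleftrightarrow> (\<forall>i v msgs a. single_minded m v \<longrightarrow>
     outcome_utility v (out (msgs(i := a))) i \<le> outcome_utility v (out (msgs(i := e v))) i)"

fun seq_mech :: "nat list \<Rightarrow> (nat \<Rightarrow> 'm) \<Rightarrow> ((nat \<Rightarrow> 'm) \<Rightarrow> outcome) \<Rightarrow> 'm mech" where
  "seq_mech [] msgs out = Leaf (fst (out msgs)) (snd (out msgs))"
| "seq_mech (i # ord) msgs out = Node i UNIV (\<lambda>a. seq_mech ord (msgs(i := a)) out)"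

lemma run_seq_mech:
  assumes "distinct ord"
  shows "\<exists>P A. run (seq_mech ord msgs out) h B = (h @ P, out A) \<and> length P = length ord \<and>
    (\<forall>k<length ord. P ! k = B (ord ! k) (h @ take k P) \<and> A (ord ! k) = P ! k) \<and>
    (\<forall>j. j \<notin> set ord \<longrightarrow> A j = msgs j)"
  using assms
proof (induction ord arbitrary: h msgs)
  case Nil
  show ?case by (intro exI[of _ "[]"] exI[of _ msgs]) auto
next
  case (Cons i ord)
  define a where "a = B i h"
  have "distinct ord" using Cons.prems by simp
  then obtain P A where run: "run (seq_mech ord (msgs(i := a)) out) (h @ [a]) B = ((h @ [a]) @ P, out A)"
    and len: "length P = length ord"
    and path: "\<forall>k<length ord. P ! k = B (ord ! k) ((h @ [a]) @ take k P) \<and> A (ord ! k) = P ! k"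
    and rest: "\<forall>j. j \<notin> set ord \<longrightarrow> A j = (msgs(i := a)) j"
    using Cons.IH[of "msgs(i := a)" "h @ [a]"] by blast
  have "A i = a" using rest Cons.prems by simp
  then have "\<forall>k<length (i # ord). (a # P) ! k = B ((i # ord) ! k) (h @ take k (a # P)) \<and>
      A ((i # ord) ! k) = (a # P) ! k"
    using path by (auto simp: a_def nth_Cons split: nat.split)
  then show ?case
    using run len rest by (intro exI[of _ "a # P"] exI[of _ A]) (auto simp: a_def)
qed

lemma subtree_seq_mech:
  "subtree (seq_mech ord msgs out) h = Some t \<Longrightarrow>
    length h \<le> length ord \<and> (\<exists>msgs'. t = seq_mech (drop (length h) ord) msgs' out)"
proof (induction h arbitrary: ord msgs)
  case (Cons x h)
  then show ?case by (cases ord) fastforce+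
qed auto

lemma subtree_seq_mech_Node:
  assumes "subtree (seq_mech ord msgs out) h = Some (Node i M ch)"
  shows "length h < length ord \<and> i = ord ! length h \<and> M = UNIV"
proof -
  obtain msgs' where node: "seq_mech (drop (length h) ord) msgs' out = Node i M ch"
    using subtree_seq_mech[OF assms] by metis
  then have "drop (length h) ord \<noteq> []" by auto
  then have "length h < length ord" by simp
  then show ?thesis using node by (simp add: Cons_nth_drop_Suc[symmetric])
qed

lemma subtree_seq_mech_Leaf:
  assumes "subtree (seq_mech ord msgs out) h = Some (Leaf a p)"
  shows "\<exists>msgs'. (a, p) = out msgs'"
proof -
  obtain msgs' where "Leaf a p = seq_mech (drop (length h) ord) msgs' out"
    using subtree_seq_mech[OF assms] by blast
  then show ?thesis by (cases "drop (length h) ord") auto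
qed

lemma det_mech_seq_mech:
  assumes "set ord \<subseteq> {..<n}" and "\<And>msgs. (\<Sum>i<n. fst (out msgs) i) \<le> m"
  shows "det_mech n m (seq_mech ord msgs out) S"
proof -
  have "i < n \<and> M \<noteq> {}" if "subtree (seq_mech ord msgs out) h = Some (Node i M ch)" for h i M ch
    using subtree_seq_mech_Node[OF that] assms(1) by (auto dest: nth_mem)
  moreover have "(\<Sum>i<n. a i) \<le> m" if "subtree (seq_mech ord msgs out) h = Some (Leaf a p)" for h a p
    using subtree_seq_mech_Leaf[OF that] assms(2) by (metis fst_conv)
  ultimately show ?thesis
    unfolding det_mech_def well_formed_def valid_behavior_def using subtree_seq_mech_Node by blast
qed

lemma alloc_seq_mech_constant:
  assumes "distinct ord"
  shows "alloc (seq_mech ord msgs out) (\<lambda>j _. e j) = fst (out (\<lambda>j. if j \<in> set ord then e j else msgs j))"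
proof -
  obtain P A where run: "run (seq_mech ord msgs out) [] (\<lambda>j _. e j) = (P, out A)"
    and path: "\<forall>k<length ord. P ! k = e (ord ! k) \<and> A (ord ! k) = P ! k"
    and rest: "\<forall>j. j \<notin> set ord \<longrightarrow> A j = msgs j"
    using run_seq_mech[OF assms, of msgs out "[]" "\<lambda>j _. e j"] by auto
  have "A = (\<lambda>j. if j \<in> set ord then e j else msgs j)"
    using path rest by (intro ext) (auto simp: in_set_conv_nth)
  then show ?thesis unfolding alloc_def using run by simp
qed

lemma utility_seq_mech_on_path:
  assumes "distinct ord" "on_path (seq_mech ord msgs out) h B" "length h < length ord"
  shows "\<exists>A. (\<forall>v i. utility v (seq_mech ord msgs out) B i = outcome_utility v (out A) i) \<and>
    (\<forall>l<length h. A (ord ! l) = h ! l) \<and> A (ord ! length h) = B (ord ! length h) h"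
proof -
  obtain P A where run: "run (seq_mech ord msgs out) [] B = (P, out A)"
    and path: "\<forall>j<length ord. P ! j = B (ord ! j) (take j P) \<and> A (ord ! j) = P ! j"
    using run_seq_mech[OF assms(1), of msgs out "[]" B] by (simp only: append_Nil) blast
  define k where "k = length h"
  have h: "h = take k P" using assms(2) run unfolding on_path_def k_def by (auto simp: prefix_def)
  have "utility v (seq_mech ord msgs out) B i = outcome_utility v (out A) i" for v i
    using run by (simp add: utility_def alloc_def pay_def outcome_utility_def)
  moreover have "A (ord ! l) = h ! l" if "l < length h" for l
    using path that assms(3) unfolding k_def[symmetric] by (simp add: h)
  moreover have "A (ord ! length h) = B (ord ! length h) h"
    using path assms(3) unfolding k_def[symmetric] by (simp add: h)
  ultimately show ?thesis by blast
qed

text \<open>When bidder \<open>i\<close> speaks, the messages of the earlier speakers are fixed by the history and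
  the later ones cannot affect \<open>i\<close>'s outcome; so any deviation, against any behaviour of the others,
  yields the outcome of a single report against the same earlier messages.\<close>

lemma OSP_seq_mech:
  assumes "distinct ord"
    and causal: "\<And>pre i post msgs msgs'. ord = pre @ i # post \<Longrightarrow>
      (\<forall>j \<in> insert i (set pre). msgs j = msgs' j) \<Longrightarrow> same_outcome (out msgs) (out msgs') i"
    and "truthful m e out"
  shows "OSP n m (seq_mech ord msgs0 out) (\<lambda>i v h. e v)"
  unfolding OSP_def
proof (intro allI impI)
  fix i :: nat and v h M ch and B B' :: "'a profile"
  let ?T = "seq_mech ord msgs0 out" and ?B = "B(i := (\<lambda>h. e v))"
  assume v: "single_minded m v" and node: "subtree ?T h = Some (Node i M ch)"
    and "on_path ?T h ?B" "on_path ?T h B'"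
  have len: "length h < length ord" and i: "i = ord ! length h"
    using subtree_seq_mech_Node[OF node] by auto
  obtain A1 where util1: "\<forall>v' j. utility v' ?T ?B j = outcome_utility v' (out A1) j"
    and hist1: "\<forall>l<length h. A1 (ord ! l) = h ! l"
    and own1: "A1 (ord ! length h) = ?B (ord ! length h) h"
    using utility_seq_mech_on_path[OF assms(1) \<open>on_path ?T h ?B\<close> len] by blast
  obtain A2 where util2: "\<forall>v' j. utility v' ?T B' j = outcome_utility v' (out A2) j"
    and hist2: "\<forall>l<length h. A2 (ord ! l) = h ! l"
    using utility_seq_mech_on_path[OF assms(1) \<open>on_path ?T h B'\<close> len] by blast
  have "A1(i := e v) = A1" using own1 i by auto
  have "same_outcome (out (A1(i := A2 i))) (out A2) i"
  proof (rule causal)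
    show "ord = take (length h) ord @ i # drop (Suc (length h)) ord"
      using len i by (simp add: id_take_nth_drop)
    show "\<forall>j \<in> insert i (set (take (length h) ord)). (A1(i := A2 i)) j = A2 j"
      using hist1 hist2 len by (auto simp: in_set_conv_nth)
  qed
  then have "outcome_utility v (out A2) i = outcome_utility v (out (A1(i := A2 i))) i"
    by (simp add: same_outcome_def outcome_utility_def)
  also have "\<dots> \<le> outcome_utility v (out A1) i"
    using \<open>truthful m e out\<close> v \<open>A1(i := e v) = A1\<close> unfolding truthful_def by metis
  finally show "utility v ?T B' i \<le> utility v ?T ?B i"
    using util1 util2 by simp
qed

definition samples_first :: "nat \<Rightarrow> (nat \<Rightarrow> bool) \<Rightarrow> nat list" where
  "samples_first n c = filter c [0..<n] @ filter (\<lambda>i. \<not> c i) [0..<n]"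

lemma distinct_samples_first: "distinct (samples_first n c)"
  by (auto simp: samples_first_def)

lemma set_samples_first: "set (samples_first n c) = {..<n}"
  by (auto simp: samples_first_def)

lemma samples_first_before_unsampled:
  assumes ord: "samples_first n c = pre @ i # post" and "\<not> c i"
  shows "{j. j < n \<and> (c j \<or> j < i)} \<subseteq> set pre"
proof -
  have "i < n" using ord set_samples_first[of n c] by (metis in_set_conv_decomp lessThan_iff)
  then have "[0..<n] = [0..<i] @ i # [Suc i..<n]"
    using upt_add_eq_append[of 0 i "n - i"] upt_conv_Cons[of i n] by simp
  then have "samples_first n c =
      (filter c [0..<n] @ filter (\<lambda>i. \<not> c i) [0..<i]) @ i # filter (\<lambda>i. \<not> c i) [Suc i..<n]"
    using \<open>\<not> c i\<close> by (simp add: samples_first_def)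
  then have "pre = filter c [0..<n] @ filter (\<lambda>i. \<not> c i) [0..<i]"
    using ord distinct_samples_first[of n c]
    by (metis append_Cons_eq_iff distinct.simps(2) distinct_append not_distinct_conv_prefix)
  then show ?thesis by auto
qed

definition sample_causal :: "nat \<Rightarrow> (nat \<Rightarrow> bool) \<Rightarrow> ((nat \<Rightarrow> 'm) \<Rightarrow> outcome) \<Rightarrow> bool" where
  "sample_causal n c out \<longleftrightarrow>
     (\<forall>i<n. c i \<longrightarrow> (\<forall>msgs msgs'. same_outcome (out msgs) (out msgs') i)) \<and>
     (\<forall>i<n. \<not> c i \<longrightarrow> (\<forall>msgs msgs'. (\<forall>j<n. c j \<or> j \<le> i \<longrightarrow> msgs j = msgs' j) \<longrightarrow>
        same_outcome (out msgs) (out msgs') i))"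

lemma OSP_samples_first:
  assumes "sample_causal n c out" and "truthful m e out"
  shows "OSP n m (seq_mech (samples_first n c) msgs0 out) (\<lambda>i v h. e v)"
proof (rule OSP_seq_mech[OF distinct_samples_first _ assms(2)])
  fix pre i post and msgs msgs' :: "nat \<Rightarrow> 'a"
  assume ord: "samples_first n c = pre @ i # post"
    and agree: "\<forall>j \<in> insert i (set pre). msgs j = msgs' j"
  have "i < n" using ord set_samples_first[of n c] by (metis in_set_conv_decomp lessThan_iff)
  show "same_outcome (out msgs) (out msgs') i"
  proof (cases "c i")
    case False
    then have "\<forall>j<n. c j \<or> j \<le> i \<longrightarrow> msgs j = msgs' j"
      using samples_first_before_unsampled[OF ord] agree by (auto simp: le_less)
    then show ?thesis using assms(1) \<open>i < n\<close> False unfolding sample_causal_def by blast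
  qed (use assms(1) \<open>i < n\<close> in \<open>auto simp: sample_causal_def\<close>)
qed

lemma det_mech_samples_first:
  assumes "\<And>msgs. (\<Sum>i<n. fst (out msgs) i) \<le> m"
  shows "det_mech n m (seq_mech (samples_first n c) msgs0 out) S"
  using assms by (intro det_mech_seq_mech) (auto simp: set_samples_first)

text \<open>For a single-minded \<open>v\<close> the least quantity of full value is its demand \<open>d\<close>, except that
  it is \<open>1\<close> when the value is \<open>0\<close> (then every \<open>d\<close> describes \<open>v\<close>).\<close>

definition demand :: "nat \<Rightarrow> valuation \<Rightarrow> nat" where
  "demand m v = (LEAST q. 1 \<le> q \<and> v q = v m)"

lemma single_minded_demand:
  assumes "single_minded m v"
  shows "0 \<le> v m" and "1 \<le> demand m v" and "demand m v \<le> m"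
    and "v q = (if demand m v \<le> q then v m else 0)"
proof -
  obtain x d where xd: "0 \<le> x" "1 \<le> d" "d \<le> m" "\<forall>q. v q = (if d \<le> q then x else 0)"
    using assms unfolding single_minded_def by blast
  have "demand m v = (if x = 0 then 1 else d)"
    unfolding demand_def using xd by (intro Least_equality) (auto split: if_splits)
  then show "0 \<le> v m" "1 \<le> demand m v" "demand m v \<le> m"
    "v q = (if demand m v \<le> q then v m else 0)"
    using xd by auto
qed

lemma single_minded_nonneg: "single_minded m v \<Longrightarrow> 0 \<le> v q"
  using single_minded_demand(1,4) by (metis order.refl)

lemma single_minded_zero: "single_minded m v \<Longrightarrow> v 0 = 0"
  using single_minded_demand(2,4) by (metis le_zero_eq not_one_le_zero)

text \<open>A message is read as a bid (value, demand); decoding is total, so any real list,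
  including a deviation, is some bid, possibly with demand \<open>0\<close>.\<close>

definition bid :: "nat \<Rightarrow> valuation \<Rightarrow> msg" where
  "bid m v = [v m, real (demand m v)]"

definition bid_value :: "msg \<Rightarrow> real" where
  "bid_value a = max 0 (a ! 0)"

definition bid_demand :: "msg \<Rightarrow> nat" where
  "bid_demand a = nat \<lceil>a ! 1\<rceil>"

definition bid_density :: "msg \<Rightarrow> real" where
  "bid_density a = bid_value a / real (bid_demand a)"

lemma bid_value_bid: "single_minded m v \<Longrightarrow> bid_value (bid m v) = v m"
  using single_minded_demand(1) by (simp add: bid_value_def bid_def)

lemma bid_demand_bid [simp]: "bid_demand (bid m v) = demand m v"
  by (simp add: bid_demand_def bid_def)

lemma bid_value_nonneg: "0 \<le> bid_value a"
  by (simp add: bid_value_def)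

lemma bid_density_nonneg: "0 \<le> bid_density a"
  by (simp add: bid_density_def bid_value_def)

lemma finite_has_least_trans_total:
  assumes "finite Q" "Q \<noteq> {}"
    and trans: "\<And>x y z. R x y \<Longrightarrow> R y z \<Longrightarrow> R x z" and total: "\<And>x y. x \<noteq> y \<Longrightarrow> R x y \<or> R y x"
  shows "\<exists>t\<in>Q. \<forall>j\<in>Q. j \<noteq> t \<longrightarrow> R t j"
  using assms(1,2)
proof (induction Q rule: finite_ne_induct)
  case (insert x Q)
  then obtain t where "t \<in> Q" and least: "\<And>j. j \<in> Q \<Longrightarrow> j \<noteq> t \<Longrightarrow> R t j" by blast
  show ?case
  proof (cases "R x t")
    case True
    then have "R x j" if "j \<in> Q" for j using least[OF that] trans[OF True] by (cases "j = t") auto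
    then show ?thesis by auto
  next
    case False
    then have "R t x" using total \<open>t \<in> Q\<close> \<open>x \<notin> Q\<close> by metis
    then show ?thesis using \<open>t \<in> Q\<close> least by auto
  qed
qed simp

definition precedes :: "(nat \<Rightarrow> real) \<Rightarrow> nat \<Rightarrow> nat \<Rightarrow> bool" where
  "precedes f j k \<longleftrightarrow> f k < f j \<or> (f j = f k \<and> j < k)"

lemma precedes_irrefl: "\<not> precedes f j j"
  by (simp add: precedes_def)

lemma precedes_asym: "precedes f j k \<Longrightarrow> \<not> precedes f k j"
  by (auto simp: precedes_def)

lemma precedes_trans: "precedes f i j \<Longrightarrow> precedes f j k \<Longrightarrow> precedes f i k"
  by (auto simp: precedes_def)

lemma precedes_total: "j \<noteq> k \<Longrightarrow> precedes f j k \<or> precedes f k j"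
  by (auto simp: precedes_def)

lemma precedes_first:
  assumes "finite Q" "Q \<noteq> {}"
  obtains t where "t \<in> Q" "\<And>j. j \<in> Q \<Longrightarrow> j \<noteq> t \<Longrightarrow> precedes f t j"
proof -
  have "\<exists>t\<in>Q. \<forall>j\<in>Q. j \<noteq> t \<longrightarrow> precedes f t j"
    by (rule finite_has_least_trans_total[OF assms]) (auto simp: precedes_def)
  then show ?thesis using that by blast
qed

lemma precedes_last:
  assumes "finite Q" "Q \<noteq> {}"
  obtains t where "t \<in> Q" "\<And>j. j \<in> Q \<Longrightarrow> j \<noteq> t \<Longrightarrow> precedes f j t"
proof -
  have "\<exists>t\<in>Q. \<forall>j\<in>Q. j \<noteq> t \<longrightarrow> precedes f j t"
    by (rule finite_has_least_trans_total[OF assms]) (auto simp: precedes_def)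
  then show ?thesis using that by blast
qed

section \<open>The sampled second-price auction\<close>

definition spa_beats :: "nat \<Rightarrow> (nat \<Rightarrow> bool) \<Rightarrow> (nat \<Rightarrow> msg) \<Rightarrow> nat \<Rightarrow> bool" where
  "spa_beats n c msgs i \<longleftrightarrow> (\<forall>s<n. c s \<longrightarrow> precedes (bid_value \<circ> msgs) i s)"

definition spa_winner :: "nat \<Rightarrow> (nat \<Rightarrow> bool) \<Rightarrow> (nat \<Rightarrow> msg) \<Rightarrow> nat \<Rightarrow> bool" where
  "spa_winner n c msgs i \<longleftrightarrow>
     i < n \<and> \<not> c i \<and> spa_beats n c msgs i \<and> (\<forall>j<i. \<not> c j \<longrightarrow> \<not> spa_beats n c msgs j)"

definition spa_price :: "nat \<Rightarrow> (nat \<Rightarrow> bool) \<Rightarrow> (nat \<Rightarrow> msg) \<Rightarrow> real" where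
  "spa_price n c msgs = Max (insert 0 ((bid_value \<circ> msgs) ` {s. s < n \<and> c s}))"

definition spa_outcome :: "nat \<Rightarrow> nat \<Rightarrow> (nat \<Rightarrow> bool) \<Rightarrow> (nat \<Rightarrow> msg) \<Rightarrow> outcome" where
  "spa_outcome n m c msgs =
     ((\<lambda>i. if spa_winner n c msgs i then m else 0),
      (\<lambda>i. if spa_winner n c msgs i then spa_price n c msgs else 0))"

lemma spa_winner_unique: "spa_winner n c msgs i \<Longrightarrow> spa_winner n c msgs j \<Longrightarrow> i = j"
  unfolding spa_winner_def using linorder_neqE_nat by blast

lemma spa_feasible: "(\<Sum>i<n. fst (spa_outcome n m c msgs) i) \<le> m"
proof (cases "\<exists>w. spa_winner n c msgs w")
  case True
  then obtain w where w: "spa_winner n c msgs w" by blast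
  then have "spa_winner n c msgs i \<longleftrightarrow> i = w" for i
    using spa_winner_unique by blast
  then have "fst (spa_outcome n m c msgs) i = (if i = w then m else 0)" for i
    by (simp add: spa_outcome_def)
  then have "(\<Sum>i<n. fst (spa_outcome n m c msgs) i) = (\<Sum>i<n. if i = w then m else 0)"
    by simp
  also have "\<dots> \<le> m" by simp
  finally show ?thesis .
qed (simp add: spa_outcome_def)

lemma spa_sample_causal: "sample_causal n c (spa_outcome n m c)"
  unfolding sample_causal_def
proof (intro conjI allI impI)
  fix i and msgs msgs' :: "nat \<Rightarrow> msg" assume "i < n" "\<not> c i" and agree: "\<forall>j<n. c j \<or> j \<le> i \<longrightarrow> msgs j = msgs' j"
  then have "spa_beats n c msgs j = spa_beats n c msgs' j" if "j \<le> i" for j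
    using that unfolding spa_beats_def precedes_def by auto
  then have "spa_winner n c msgs i = spa_winner n c msgs' i"
    unfolding spa_winner_def by auto
  moreover have "spa_price n c msgs = spa_price n c msgs'"
    unfolding spa_price_def using agree by (intro arg_cong[where f = Max] image_cong) auto
  ultimately show "same_outcome (spa_outcome n m c msgs) (spa_outcome n m c msgs') i"
    by (simp add: same_outcome_def spa_outcome_def)
qed (auto simp: same_outcome_def spa_outcome_def spa_winner_def)

lemma spa_price_le_value:
  assumes "spa_beats n c msgs i"
  shows "spa_price n c msgs \<le> bid_value (msgs i)"
proof -
  have "bid_value (msgs s) \<le> bid_value (msgs i)" if "s < n" "c s" for s
    using assms that unfolding spa_beats_def precedes_def by force
  then show ?thesis unfolding spa_price_def using bid_value_nonneg by (subst Max_le_iff) auto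
qed

lemma spa_value_le_price:
  assumes "\<not> spa_beats n c msgs i"
  shows "bid_value (msgs i) \<le> spa_price n c msgs"
proof -
  obtain s where s: "s < n" "c s" "\<not> precedes (bid_value \<circ> msgs) i s"
    using assms unfolding spa_beats_def by blast
  then have "bid_value (msgs i) \<le> bid_value (msgs s)" unfolding precedes_def by auto
  also have "\<dots> \<le> spa_price n c msgs" unfolding spa_price_def using s by (intro Max_ge) auto
  finally show ?thesis .
qed

text \<open>The price does not depend on the winner's own bid, and a truthful bid beats the samples
  exactly when it is worth paying the price.\<close>

lemma spa_truthful: "truthful m (bid m) (spa_outcome n m c)"
  unfolding truthful_def
proof (intro allI impI)
  fix i v and msgs :: "nat \<Rightarrow> msg" and a assume v: "single_minded m v"
  define A where "A = msgs(i := a)"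
  define E where "E = msgs(i := bid m v)"
  show "outcome_utility v (spa_outcome n m c A) i \<le> outcome_utility v (spa_outcome n m c E) i"
  proof (cases "i < n \<and> \<not> c i")
    case True
    have value_E: "bid_value (E i) = v m" using bid_value_bid[OF v] by (simp add: E_def)
    have beats_others: "spa_beats n c A j = spa_beats n c E j" if "j \<noteq> i" for j
      unfolding spa_beats_def precedes_def A_def E_def using True that by auto
    have price: "spa_price n c A = spa_price n c E"
      unfolding spa_price_def A_def E_def using True
      by (intro arg_cong[where f = Max] arg_cong[where f = "insert 0"] image_cong) auto
    define others where "others \<longleftrightarrow> (\<forall>j<i. \<not> c j \<longrightarrow> \<not> spa_beats n c E j)"
    have win_A: "spa_winner n c A i \<longleftrightarrow> others \<and> spa_beats n c A i"
      unfolding spa_winner_def others_def using True beats_others by auto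
    have win_E: "spa_winner n c E i \<longleftrightarrow> others \<and> spa_beats n c E i"
      unfolding spa_winner_def others_def using True by auto
    have "spa_price n c E \<le> v m" if "spa_beats n c E i"
      using spa_price_le_value[OF that] value_E by simp
    moreover have "v m \<le> spa_price n c E" if "\<not> spa_beats n c E i"
      using spa_value_le_price[OF that] value_E by simp
    ultimately show ?thesis
      using win_A win_E price single_minded_zero[OF v] single_minded_demand(1)[OF v]
      unfolding outcome_utility_def spa_outcome_def by auto
  qed (auto simp: outcome_utility_def spa_outcome_def spa_winner_def)
qed

section \<open>The sampled posted-price auction\<close>

definition sample_demand_ahead :: "(nat \<Rightarrow> real) \<Rightarrow> (nat \<Rightarrow> nat) \<Rightarrow> nat set \<Rightarrow> (nat \<Rightarrow> bool) \<Rightarrow> nat \<Rightarrow> nat" where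
  "sample_demand_ahead f d Q c j = (\<Sum>k | k \<in> Q \<and> c k \<and> precedes f k j. d k)"

definition ppa_demand_ahead :: "nat \<Rightarrow> (nat \<Rightarrow> bool) \<Rightarrow> (nat \<Rightarrow> msg) \<Rightarrow> nat \<Rightarrow> nat" where
  "ppa_demand_ahead n c msgs = sample_demand_ahead (bid_density \<circ> msgs) (bid_demand \<circ> msgs) {..<n} c"

text \<open>The per-unit price is the density of the sample at which the sampled demand, in order of
  decreasing density, reaches the supply \<open>m\<close>, or \<open>0\<close> if it never does.\<close>

definition ppa_price :: "nat \<Rightarrow> nat \<Rightarrow> (nat \<Rightarrow> bool) \<Rightarrow> (nat \<Rightarrow> msg) \<Rightarrow> real" where
  "ppa_price n m c msgs = Max (insert 0 ((bid_density \<circ> msgs) `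
     {s. s < n \<and> c s \<and> m \<le> ppa_demand_ahead n c msgs s + bid_demand (msgs s)}))"

definition ppa_eligible :: "nat \<Rightarrow> nat \<Rightarrow> (nat \<Rightarrow> bool) \<Rightarrow> (nat \<Rightarrow> msg) \<Rightarrow> nat \<Rightarrow> bool" where
  "ppa_eligible n m c msgs i \<longleftrightarrow> ppa_demand_ahead n c msgs i < m"

fun ppa_used :: "nat \<Rightarrow> nat \<Rightarrow> (nat \<Rightarrow> bool) \<Rightarrow> (nat \<Rightarrow> msg) \<Rightarrow> nat \<Rightarrow> nat" where
  "ppa_used n m c msgs 0 = 0"
| "ppa_used n m c msgs (Suc i) = ppa_used n m c msgs i +
     (if i < n \<and> \<not> c i \<and> ppa_eligible n m c msgs i \<and> ppa_used n m c msgs i + bid_demand (msgs i) \<le> m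
      then bid_demand (msgs i) else 0)"

definition ppa_served :: "nat \<Rightarrow> nat \<Rightarrow> (nat \<Rightarrow> bool) \<Rightarrow> (nat \<Rightarrow> msg) \<Rightarrow> nat \<Rightarrow> bool" where
  "ppa_served n m c msgs i \<longleftrightarrow>
     i < n \<and> \<not> c i \<and> ppa_eligible n m c msgs i \<and> ppa_used n m c msgs i + bid_demand (msgs i) \<le> m"

definition ppa_outcome :: "nat \<Rightarrow> nat \<Rightarrow> (nat \<Rightarrow> bool) \<Rightarrow> (nat \<Rightarrow> msg) \<Rightarrow> outcome" where
  "ppa_outcome n m c msgs =
     ((\<lambda>i. if ppa_served n m c msgs i then bid_demand (msgs i) else 0),
      (\<lambda>i. if ppa_served n m c msgs i then ppa_price n m c msgs * bid_demand (msgs i) else 0))"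

lemma sum_ppa_alloc: "(\<Sum>j<i. fst (ppa_outcome n m c msgs) j) = ppa_used n m c msgs i"
  by (induction i) (simp_all add: ppa_outcome_def ppa_served_def)

lemma ppa_used_le: "ppa_used n m c msgs i \<le> m"
  by (induction i) auto

lemma ppa_feasible: "(\<Sum>i<n. fst (ppa_outcome n m c msgs) i) \<le> m"
  unfolding sum_ppa_alloc by (rule ppa_used_le)

lemma ppa_demand_ahead_cong:
  assumes "\<And>s. s < n \<Longrightarrow> c s \<Longrightarrow> msgs s = msgs' s" and "msgs j = msgs' j"
  shows "ppa_demand_ahead n c msgs j = ppa_demand_ahead n c msgs' j"
proof -
  have "{k. k \<in> {..<n} \<and> c k \<and> precedes (bid_density \<circ> msgs) k j} =
      {k. k \<in> {..<n} \<and> c k \<and> precedes (bid_density \<circ> msgs') k j}"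
    using assms unfolding precedes_def by auto
  then show ?thesis
    unfolding ppa_demand_ahead_def sample_demand_ahead_def using assms by (intro sum.cong) auto
qed

lemma ppa_price_cong:
  assumes "\<And>s. s < n \<Longrightarrow> c s \<Longrightarrow> msgs s = msgs' s"
  shows "ppa_price n m c msgs = ppa_price n m c msgs'"
proof -
  have "{s. s < n \<and> c s \<and> m \<le> ppa_demand_ahead n c msgs s + bid_demand (msgs s)} =
      {s. s < n \<and> c s \<and> m \<le> ppa_demand_ahead n c msgs' s + bid_demand (msgs' s)}"
    using ppa_demand_ahead_cong[of n c msgs msgs'] assms by auto
  then show ?thesis
    unfolding ppa_price_def using assms by (intro arg_cong[where f = Max] arg_cong[where f = "insert 0"] image_cong) auto
qed

lemma ppa_used_cong:
  assumes samples: "\<And>s. s < n \<Longrightarrow> c s \<Longrightarrow> msgs s = msgs' s"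
    and earlier: "\<And>j. j < i \<Longrightarrow> msgs j = msgs' j"
  shows "ppa_used n m c msgs i = ppa_used n m c msgs' i"
  using earlier
proof (induction i)
  case (Suc i)
  then have "msgs i = msgs' i" and "ppa_used n m c msgs i = ppa_used n m c msgs' i" by simp_all
  moreover have "ppa_eligible n m c msgs i = ppa_eligible n m c msgs' i"
    unfolding ppa_eligible_def using ppa_demand_ahead_cong[of n c msgs msgs' i] samples calculation(1) by simp
  ultimately show ?case by simp
qed simp

lemma ppa_sample_causal: "sample_causal n c (ppa_outcome n m c)"
  unfolding sample_causal_def
proof (intro conjI allI impI)
  fix i and msgs msgs' :: "nat \<Rightarrow> msg"
  assume "i < n" and agree: "\<forall>j<n. c j \<or> j \<le> i \<longrightarrow> msgs j = msgs' j"
  then have samples: "\<And>s. s < n \<Longrightarrow> c s \<Longrightarrow> msgs s = msgs' s" and own: "msgs i = msgs' i" by auto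
  have "ppa_used n m c msgs i = ppa_used n m c msgs' i"
    using \<open>i < n\<close> agree by (intro ppa_used_cong[OF samples]) auto
  moreover have "ppa_eligible n m c msgs i = ppa_eligible n m c msgs' i"
    unfolding ppa_eligible_def using ppa_demand_ahead_cong[of n c msgs msgs' i] samples own by simp
  moreover have "ppa_price n m c msgs = ppa_price n m c msgs'"
    by (rule ppa_price_cong[OF samples])
  ultimately show "same_outcome (ppa_outcome n m c msgs) (ppa_outcome n m c msgs') i"
    using own by (simp add: same_outcome_def ppa_outcome_def ppa_served_def)
qed (auto simp: same_outcome_def ppa_outcome_def ppa_served_def)

lemma ppa_price_nonneg: "0 \<le> ppa_price n m c msgs"
  unfolding ppa_price_def by (intro Max_ge) auto

lemma ppa_price_le_density:
  assumes "ppa_eligible n m c msgs i"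
  shows "ppa_price n m c msgs \<le> bid_density (msgs i)"
proof -
  have "bid_density (msgs s) \<le> bid_density (msgs i)"
    if s: "s < n" "c s" "m \<le> ppa_demand_ahead n c msgs s + bid_demand (msgs s)" for s
  proof (rule ccontr)
    let ?f = "bid_density \<circ> msgs" and ?d = "bid_demand \<circ> msgs"
    assume "\<not> ?thesis"
    then have "insert s {k. k < n \<and> c k \<and> precedes ?f k s} \<subseteq> {k. k < n \<and> c k \<and> precedes ?f k i}"
      using s unfolding precedes_def by auto
    then have "(\<Sum>k\<in>insert s {k. k < n \<and> c k \<and> precedes ?f k s}. ?d k) \<le> (\<Sum>k | k < n \<and> c k \<and> precedes ?f k i. ?d k)"
      by (intro sum_mono2) auto
    then have "ppa_demand_ahead n c msgs s + bid_demand (msgs s) \<le> ppa_demand_ahead n c msgs i"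
      by (simp add: ppa_demand_ahead_def sample_demand_ahead_def precedes_irrefl)
    then show False using s(3) assms unfolding ppa_eligible_def by simp
  qed
  then show ?thesis unfolding ppa_price_def using bid_density_nonneg by (subst Max_le_iff) auto
qed

lemma ppa_density_le_price:
  assumes "\<not> ppa_eligible n m c msgs i" and "1 \<le> m"
  shows "bid_density (msgs i) \<le> ppa_price n m c msgs"
proof -
  let ?f = "bid_density \<circ> msgs" and ?d = "bid_demand \<circ> msgs"
  define Z where "Z = {k. k < n \<and> c k \<and> precedes ?f k i}"
  have "finite Z" by (simp add: Z_def)
  have demand_Z: "m \<le> (\<Sum>k\<in>Z. ?d k)"
    using assms(1) by (simp add: ppa_eligible_def ppa_demand_ahead_def sample_demand_ahead_def Z_def)
  then have "Z \<noteq> {}" using assms(2) by auto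
  then obtain s where "s \<in> Z" and last: "\<And>k. k \<in> Z \<Longrightarrow> k \<noteq> s \<Longrightarrow> precedes ?f k s"
    using precedes_last[OF \<open>finite Z\<close>] by blast
  then have "Z \<subseteq> insert s {k. k < n \<and> c k \<and> precedes ?f k s}" by (auto simp: Z_def)
  then have "(\<Sum>k\<in>Z. ?d k) \<le> (\<Sum>k\<in>insert s {k. k < n \<and> c k \<and> precedes ?f k s}. ?d k)"
    by (intro sum_mono2) auto
  also have "\<dots> = bid_demand (msgs s) + ppa_demand_ahead n c msgs s"
    by (simp add: ppa_demand_ahead_def sample_demand_ahead_def precedes_irrefl)
  finally have "?f s \<le> ppa_price n m c msgs"
    using demand_Z \<open>s \<in> Z\<close> unfolding ppa_price_def Z_def by (intro Max_ge) auto
  moreover have "?f i \<le> ?f s" using \<open>s \<in> Z\<close> unfolding Z_def precedes_def by auto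
  ultimately show ?thesis by simp
qed

lemma ppa_report_independent:
  assumes "\<not> c i"
  shows "ppa_price n m c (msgs(i := a)) = ppa_price n m c msgs"
    and "ppa_used n m c (msgs(i := a)) i = ppa_used n m c msgs i"
  using assms by (auto intro!: ppa_price_cong ppa_used_cong)

lemma ppa_utility:
  assumes "v 0 = 0"
  shows "outcome_utility v (ppa_outcome n m c msgs) i = (if ppa_served n m c msgs i
    then v (bid_demand (msgs i)) - ppa_price n m c msgs * bid_demand (msgs i) else 0)"
  using assms by (simp add: outcome_utility_def ppa_outcome_def)

text \<open>The truthful report is eligible only if the price is at most the bidder's density and
  ineligible only if it is at least that density: the bidder faces a posted per-unit price.\<close>

lemma ppa_truthful: "truthful m (bid m) (ppa_outcome n m c)"
  unfolding truthful_def
proof (intro allI impI)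
  fix i v and msgs :: "nat \<Rightarrow> msg" and a assume v: "single_minded m v"
  define A where "A = msgs(i := a)"
  define E where "E = msgs(i := bid m v)"
  show "outcome_utility v (ppa_outcome n m c A) i \<le> outcome_utility v (ppa_outcome n m c E) i"
  proof (cases "i < n \<and> \<not> c i")
    case True
    define x d q where "x = v m" and "d = demand m v" and "q = bid_demand a"
    define p U where "p = ppa_price n m c msgs" and "U = ppa_used n m c msgs i"
    have "1 \<le> d" using single_minded_demand(2)[OF v] by (simp add: d_def)
    have "0 \<le> p" by (simp add: p_def ppa_price_nonneg)
    have price: "ppa_price n m c (msgs(i := b)) = p" for b
      using True ppa_report_independent by (simp add: p_def)
    have served: "ppa_served n m c (msgs(i := b)) i \<longleftrightarrow> ppa_eligible n m c (msgs(i := b)) i \<and> U + bid_demand b \<le> m" for b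
      using True ppa_report_independent by (simp add: ppa_served_def U_def)
    have density_E: "bid_density (E i) = x / d"
      using bid_value_bid[OF v] by (simp add: bid_density_def E_def x_def d_def)
    have gain: "p * d \<le> x" if "ppa_eligible n m c E i"
      using ppa_price_le_density[OF that] density_E \<open>1 \<le> d\<close> price by (simp add: E_def pos_le_divide_eq)
    have no_gain: "x \<le> p * d" if "\<not> ppa_eligible n m c E i"
      using ppa_density_le_price[OF that] density_E \<open>1 \<le> d\<close> price single_minded_demand(3)[OF v]
      by (simp add: E_def d_def pos_divide_le_eq)
    have v_q: "v q = (if d \<le> q then x else 0)" and "v d = x"
      using single_minded_demand(4)[OF v] by (simp_all add: x_def d_def)
    moreover have "p * d \<le> p * q" if "d \<le> q" using that \<open>0 \<le> p\<close> by (simp add: mult_left_mono)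
    moreover have "0 \<le> p * q" using \<open>0 \<le> p\<close> by simp
    ultimately show ?thesis
      unfolding ppa_utility[of v, OF single_minded_zero[OF v]] A_def E_def served price
      using gain no_gain by (auto simp: not_le x_def d_def q_def E_def)
  qed (auto simp: outcome_utility_def ppa_outcome_def ppa_served_def)
qed

definition truthful_strategy :: "nat \<Rightarrow> nat \<Rightarrow> msg strategy" where
  "truthful_strategy m = (\<lambda>i v h. bid m v)"

definition truthful_bids :: "nat \<Rightarrow> nat \<Rightarrow> (nat \<Rightarrow> valuation) \<Rightarrow> nat \<Rightarrow> msg" where
  "truthful_bids n m vs j = (if j < n then bid m (vs j) else [])"

definition spa_mech :: "nat \<Rightarrow> nat \<Rightarrow> (nat \<Rightarrow> bool) \<Rightarrow> msg mech" where
  "spa_mech n m c = seq_mech (samples_first n c) (\<lambda>_. []) (spa_outcome n m c)"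

definition ppa_mech :: "nat \<Rightarrow> nat \<Rightarrow> (nat \<Rightarrow> bool) \<Rightarrow> msg mech" where
  "ppa_mech n m c = seq_mech (samples_first n c) (\<lambda>_. []) (ppa_outcome n m c)"

lemma OSP_spa_mech: "det_mech n m (spa_mech n m c) (truthful_strategy m) \<and> OSP n m (spa_mech n m c) (truthful_strategy m)"
  unfolding spa_mech_def truthful_strategy_def
  by (simp add: det_mech_samples_first spa_feasible OSP_samples_first spa_sample_causal spa_truthful)

lemma OSP_ppa_mech: "det_mech n m (ppa_mech n m c) (truthful_strategy m) \<and> OSP n m (ppa_mech n m c) (truthful_strategy m)"
  unfolding ppa_mech_def truthful_strategy_def
  by (simp add: det_mech_samples_first ppa_feasible OSP_samples_first ppa_sample_causal ppa_truthful)

lemma welfare_samples_first: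
  "welfare n (seq_mech (samples_first n c) (\<lambda>_. []) out) (truthful_strategy m) vs =
     (\<Sum>i<n. vs i (fst (out (truthful_bids n m vs)) i))"
proof -
  have "(\<lambda>j. truthful_strategy m j (vs j)) = (\<lambda>j _. bid m (vs j))"
    by (simp add: truthful_strategy_def)
  then show ?thesis
    unfolding welfare_def
    by (simp add: alloc_seq_mech_constant distinct_samples_first set_samples_first truthful_bids_def[abs_def])
qed

abbreviation sample_pmf :: "nat set \<Rightarrow> (nat \<Rightarrow> bool) pmf" where
  "sample_pmf I \<equiv> Pi_pmf I False (\<lambda>_. bernoulli_pmf (9/10))"

lemma finite_set_sample_pmf: "finite I \<Longrightarrow> finite (set_pmf (sample_pmf I))"
  by (subst set_Pi_pmf) (auto intro!: finite_PiE_dflt)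

lemma expectation_mono_finite_pmf:
  fixes f g :: "'a \<Rightarrow> real"
  assumes "finite (set_pmf M)" "\<And>x. x \<in> set_pmf M \<Longrightarrow> f x \<le> g x"
  shows "measure_pmf.expectation M f \<le> measure_pmf.expectation M g"
  using assms by (intro integral_mono_AE integrable_measure_pmf_finite) (auto simp: AE_measure_pmf_iff)

lemma expectation_sample_pmf_split:
  fixes f :: "(nat \<Rightarrow> bool) \<Rightarrow> real"
  assumes "finite I" "i \<in> I"
  shows "measure_pmf.expectation (sample_pmf I) f =
    9/10 * measure_pmf.expectation (sample_pmf (I - {i})) (\<lambda>c. f (c(i := True))) +
    1/10 * measure_pmf.expectation (sample_pmf (I - {i})) (\<lambda>c. f (c(i := False)))"
proof -
  have "sample_pmf I = bernoulli_pmf (9/10) \<bind> (\<lambda>y. map_pmf (\<lambda>c. c(i := y)) (sample_pmf (I - {i})))"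
    using Pi_pmf_insert[of "I - {i}" i False "\<lambda>_. bernoulli_pmf (9/10)"] assms
    by (simp add: insert_absorb pair_pmf_def map_bind_pmf map_pmf_def[symmetric] pmf.map_comp o_def)
  then have "measure_pmf.expectation (sample_pmf I) f = (\<Sum>y\<in>UNIV. pmf (bernoulli_pmf (9/10)) y *\<^sub>R
      measure_pmf.expectation (map_pmf (\<lambda>c. c(i := y)) (sample_pmf (I - {i}))) f)"
    using assms by (simp only:) (rule pmf_expectation_bind; simp add: finite_set_sample_pmf)
  then show ?thesis by (simp add: UNIV_bool)
qed

lemma expectation_unsampled:
  fixes a :: real
  assumes "finite I" "t \<in> I"
  shows "measure_pmf.expectation (sample_pmf I) (\<lambda>c. if c t then 0 else a) = a / 10"
  using assms by (subst expectation_sample_pmf_split[of _ t]) auto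

lemma expectation_unsampled_sampled:
  fixes a :: real
  assumes "finite I" "t \<in> I" "s \<in> I" "s \<noteq> t"
  shows "measure_pmf.expectation (sample_pmf I) (\<lambda>c. if \<not> c t \<and> c s then a else 0) = 9/100 * a"
  using assms by (simp add: expectation_sample_pmf_split[of _ t] expectation_sample_pmf_split[of _ s])

definition admitted_demand :: "(nat \<Rightarrow> real) \<Rightarrow> (nat \<Rightarrow> nat) \<Rightarrow> nat set \<Rightarrow> real \<Rightarrow> (nat \<Rightarrow> bool) \<Rightarrow> real" where
  "admitted_demand f d Q b c =
     (\<Sum>j\<in>Q. if \<not> c j \<and> real (sample_demand_ahead f d Q c j) < b then real (d j) else 0)"

lemma admitted_demand_nonneg: "0 \<le> admitted_demand f d Q b c"
  unfolding admitted_demand_def by (intro sum_nonneg) auto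

lemma admitted_demand_nonpos_budget: "b \<le> 0 \<Longrightarrow> admitted_demand f d Q b = (\<lambda>_. 0)"
  unfolding admitted_demand_def by (intro ext sum.neutral) auto

lemma sample_demand_ahead_fun_upd:
  assumes "j \<notin> Q"
  shows "sample_demand_ahead f d Q (c(j := y)) k = sample_demand_ahead f d Q c k"
proof -
  have "{k'. k' \<in> Q \<and> (c(j := y)) k' \<and> precedes f k' k} = {k'. k' \<in> Q \<and> c k' \<and> precedes f k' k}"
    using assms by auto
  then show ?thesis by (simp add: sample_demand_ahead_def)
qed

lemma admitted_demand_fun_upd: "j \<notin> Q \<Longrightarrow> admitted_demand f d Q b (c(j := y)) = admitted_demand f d Q b c"
  unfolding admitted_demand_def by (intro sum.cong) (auto simp: sample_demand_ahead_fun_upd)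

lemma admitted_demand_remove_first:
  assumes "finite Q" "j0 \<in> Q" and first: "\<And>k. k \<in> Q \<Longrightarrow> k \<noteq> j0 \<Longrightarrow> precedes f j0 k"
  shows "admitted_demand f d Q b c = (if \<not> c j0 \<and> 0 < b then real (d j0) else 0) +
    admitted_demand f d (Q - {j0}) (if c j0 then b - d j0 else b) c"
proof -
  have none_ahead: "{k. k \<in> Q \<and> c k \<and> precedes f k j0} = {}"
    using first precedes_asym precedes_irrefl by blast
  have ahead_j0: "sample_demand_ahead f d Q c j0 = 0"
    unfolding sample_demand_ahead_def none_ahead by simp
  have ahead: "sample_demand_ahead f d Q c j = (if c j0 then d j0 else 0) + sample_demand_ahead f d (Q - {j0}) c j"
    if "j \<in> Q - {j0}" for j
  proof -
    have "{k. k \<in> Q \<and> c k \<and> precedes f k j} =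
        (if c j0 then insert j0 else id) {k. k \<in> Q - {j0} \<and> c k \<and> precedes f k j}"
      using first[of j] that assms(2) by auto
    then show ?thesis using assms(1) by (simp add: sample_demand_ahead_def)
  qed
  have "admitted_demand f d Q b c = (if \<not> c j0 \<and> 0 < b then real (d j0) else 0) +
      (\<Sum>j\<in>Q - {j0}. if \<not> c j \<and> real (sample_demand_ahead f d Q c j) < b then real (d j) else 0)"
    unfolding admitted_demand_def using assms(1,2) ahead_j0 by (subst sum.remove[of _ j0]) auto
  also have "(\<Sum>j\<in>Q - {j0}. if \<not> c j \<and> real (sample_demand_ahead f d Q c j) < b then real (d j) else 0) =
      admitted_demand f d (Q - {j0}) (if c j0 then b - d j0 else b) c"
    unfolding admitted_demand_def using ahead by (intro sum.cong refl) (auto simp: algebra_simps)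
  finally show ?thesis .
qed

lemma expectation_admitted_demand_remove_first:
  fixes d :: "nat \<Rightarrow> nat" and b :: real and E :: "real \<Rightarrow> real"
  assumes "finite I" "Q \<subseteq> I" "0 < b" "j0 \<in> Q"
    and first: "\<And>k. k \<in> Q \<Longrightarrow> k \<noteq> j0 \<Longrightarrow> precedes f j0 k"
  defines "E b' \<equiv> measure_pmf.expectation (sample_pmf (I - {j0})) (admitted_demand f d (Q - {j0}) b')"
  shows "measure_pmf.expectation (sample_pmf I) (admitted_demand f d Q b) = 9/10 * E (b - d j0) + 1/10 * (d j0 + E b)"
proof -
  have "finite Q" using assms(1,2) finite_subset by blast
  have split: "admitted_demand f d Q b (c(j0 := y)) =
      (if \<not> y then real (d j0) else 0) + admitted_demand f d (Q - {j0}) (if y then b - d j0 else b) c" for c y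
    using admitted_demand_remove_first[OF \<open>finite Q\<close> \<open>j0 \<in> Q\<close> first, of d b "c(j0 := y)"]
      admitted_demand_fun_upd[of j0 "Q - {j0}"] \<open>0 < b\<close> by simp
  have "finite (set_pmf (sample_pmf (I - {j0})))" using assms(1) by (simp add: finite_set_sample_pmf)
  then show ?thesis
    using assms(1,2,4)
    by (subst expectation_sample_pmf_split[of _ j0]) (auto simp: split E_def integrable_measure_pmf_finite)
qed

text \<open>A Wald-type bound. Scanning \<open>Q\<close> in the order of \<open>f\<close>, each bidder is a sample with
  probability \<open>9/10\<close>, and unsampled demand is admitted only until the sampled demand reaches \<open>b\<close>,
  which it overshoots by at most \<open>M\<close>. So the admitted demand is in expectation a ninth of at most
  \<open>b + M\<close>.\<close>

lemma expectation_admitted_demand_le: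
  assumes "finite I" "Q \<subseteq> I" "0 < b" "\<And>j. j \<in> Q \<Longrightarrow> d j \<le> M"
  shows "measure_pmf.expectation (sample_pmf I) (admitted_demand f d Q b) \<le> (b + M) / 9"
  using assms
proof (induction "card Q" arbitrary: Q I b rule: less_induct)
  case less
  have "finite Q" using less.prems finite_subset by blast
  show ?case
  proof (cases "Q = {}")
    case True
    then have "admitted_demand f d Q b = (\<lambda>_. 0)" by (simp add: admitted_demand_def fun_eq_iff)
    then show ?thesis using less.prems by simp
  next
    case False
    obtain j0 where j0: "j0 \<in> Q" "\<And>k. k \<in> Q \<Longrightarrow> k \<noteq> j0 \<Longrightarrow> precedes f j0 k"
      using precedes_first[OF \<open>finite Q\<close> False] by blast
    define E where "E b' = measure_pmf.expectation (sample_pmf (I - {j0})) (admitted_demand f d (Q - {j0}) b')" for b'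
    have "real (d j0) \<le> M" using less.prems j0 by auto
    have IH: "E b' \<le> (b' + M) / 9" if "0 < b'" for b'
      unfolding E_def
      using less.hyps[OF card_Diff1_less[OF \<open>finite Q\<close> j0(1)], of "I - {j0}" b'] less.prems that
      by auto
    have IH0: "E b' = 0" if "b' \<le> 0" for b'
      unfolding E_def by (simp add: admitted_demand_nonpos_budget[OF that])
    have "measure_pmf.expectation (sample_pmf I) (admitted_demand f d Q b) = 9/10 * E (b - d j0) + 1/10 * (d j0 + E b)"
      unfolding E_def using less.prems(1-3) j0 by (rule expectation_admitted_demand_remove_first)
    also have "\<dots> \<le> (b + M) / 9"
    proof (cases "0 < b - d j0")
      case True
      then show ?thesis using IH[OF True] IH[OF less.prems(3)] by (simp add: field_simps)
    next
      case False
      then show ?thesis using IH0 IH[OF less.prems(3)] less.prems(3) \<open>real (d j0) \<le> M\<close>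
        by (simp add: field_simps)
    qed
    finally show ?thesis .
  qed
qed

section \<open>Welfare guarantees\<close>

locale single_minded_profile =
  fixes n m :: nat and vs :: "nat \<Rightarrow> valuation"
  assumes single_minded_vs: "\<And>i. i < n \<Longrightarrow> single_minded m (vs i)" and bidders: "0 < n"
begin

definition xval :: "nat \<Rightarrow> real" where
  "xval i = vs i m"

definition dem :: "nat \<Rightarrow> nat" where
  "dem i = demand m (vs i)"

definition dens :: "nat \<Rightarrow> real" where
  "dens i = xval i / dem i"

definition xmax :: real where
  "xmax = Max (xval ` {..<n})"

abbreviation bids :: "nat \<Rightarrow> msg" where
  "bids \<equiv> truthful_bids n m vs"

lemma xval_nonneg: "i < n \<Longrightarrow> 0 \<le> xval i"
  unfolding xval_def using single_minded_demand(1)[OF single_minded_vs] .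

lemma vs_nonneg: "i < n \<Longrightarrow> 0 \<le> vs i q"
  using single_minded_nonneg[OF single_minded_vs] .

lemma dem_bounds: "i < n \<Longrightarrow> 1 \<le> dem i \<and> dem i \<le> m"
  unfolding dem_def using single_minded_demand(2,3)[OF single_minded_vs] by blast

lemma supply_pos: "1 \<le> m"
  using dem_bounds[OF bidders] by linarith

lemma vs_eq: "i < n \<Longrightarrow> vs i q = (if dem i \<le> q then xval i else 0)"
  unfolding dem_def xval_def using single_minded_demand(4)[OF single_minded_vs] .

lemma xval_eq: "i < n \<Longrightarrow> xval i = dens i * dem i"
  unfolding dens_def using dem_bounds[of i] by simp

lemma dens_nonneg: "i < n \<Longrightarrow> 0 \<le> dens i"
  unfolding dens_def using xval_nonneg by simp

lemma xmax_ge: "i < n \<Longrightarrow> xval i \<le> xmax"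
  unfolding xmax_def by (intro Max_ge) auto

lemma xmax_nonneg: "0 \<le> xmax"
  using xmax_ge[OF bidders] xval_nonneg[OF bidders] by linarith

lemma bid_value_bids: "i < n \<Longrightarrow> bid_value (bids i) = xval i"
  unfolding truthful_bids_def xval_def using bid_value_bid[OF single_minded_vs] by simp

lemma bid_demand_bids: "i < n \<Longrightarrow> bid_demand (bids i) = dem i"
  by (simp add: truthful_bids_def dem_def)

lemma bid_density_bids: "i < n \<Longrightarrow> bid_density (bids i) = dens i"
  by (simp add: bid_density_def dens_def bid_value_bids bid_demand_bids)

definition spa_welfare :: "(nat \<Rightarrow> bool) \<Rightarrow> real" where
  "spa_welfare c = (\<Sum>i<n. vs i (fst (spa_outcome n m c bids) i))"

lemma spa_welfare_nonneg: "0 \<le> spa_welfare c"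
  unfolding spa_welfare_def by (intro sum_nonneg) (simp add: vs_nonneg)

lemma spa_welfare_ge_top:
  assumes "t < n" and top: "\<And>j. j < n \<Longrightarrow> j \<noteq> t \<Longrightarrow> precedes xval t j" and "\<not> c t"
    and rivals_lose: "\<And>j. j < n \<Longrightarrow> j \<noteq> t \<Longrightarrow> \<not> c j \<Longrightarrow> \<exists>s<n. c s \<and> precedes xval s j"
  shows "xval t \<le> spa_welfare c"
proof -
  have precedes_bids: "precedes (bid_value \<circ> bids) j k \<longleftrightarrow> precedes xval j k" if "j < n" "k < n" for j k
    using that by (simp add: precedes_def bid_value_bids)
  have "spa_beats n c bids t"
    unfolding spa_beats_def using \<open>t < n\<close> \<open>\<not> c t\<close> top precedes_bids by metis
  moreover have "\<not> spa_beats n c bids j" if "j < n" "j \<noteq> t" "\<not> c j" for j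
    using rivals_lose[OF that] that precedes_bids precedes_asym unfolding spa_beats_def by metis
  ultimately have "spa_winner n c bids t"
    unfolding spa_winner_def using \<open>t < n\<close> \<open>\<not> c t\<close> by auto
  then have "xval t = vs t (fst (spa_outcome n m c bids) t)"
    by (simp add: spa_outcome_def xval_def)
  also have "\<dots> \<le> spa_welfare c"
    unfolding spa_welfare_def using \<open>t < n\<close> by (intro member_le_sum) (auto simp: vs_nonneg)
  finally show ?thesis .
qed

lemma spa_welfare_ge_top_runner_up:
  assumes "t < n" and top: "\<And>j. j < n \<Longrightarrow> j \<noteq> t \<Longrightarrow> precedes xval t j"
    and "s < n" and second: "\<And>j. j < n \<Longrightarrow> j \<noteq> t \<Longrightarrow> j \<noteq> s \<Longrightarrow> precedes xval s j"
    and "\<not> c t" "c s"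
  shows "xval t \<le> spa_welfare c"
proof -
  have rivals: "\<exists>s'<n. c s' \<and> precedes xval s' j" if "j < n" "j \<noteq> t" "\<not> c j" for j
  proof -
    have "j \<noteq> s" using that \<open>c s\<close> by auto
    then show ?thesis using second[OF that(1,2)] \<open>s < n\<close> \<open>c s\<close> by blast
  qed
  show ?thesis by (rule spa_welfare_ge_top[of t c, OF \<open>t < n\<close> top \<open>\<not> c t\<close> rivals])
qed

text \<open>With probability at least \<open>9/100\<close> the highest bidder is not sampled while the second highest
  is (when there is one), and then the highest bidder wins.\<close>

lemma expected_spa_welfare: "9/100 * xmax \<le> measure_pmf.expectation (sample_pmf {..<n}) spa_welfare"
proof -
  obtain t where "t \<in> {..<n}" and top': "\<And>j. j \<in> {..<n} \<Longrightarrow> j \<noteq> t \<Longrightarrow> precedes xval t j"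
    by (rule precedes_first[of "{..<n}"]) (use bidders in auto)
  then have "t < n" and top: "\<And>j. j < n \<Longrightarrow> j \<noteq> t \<Longrightarrow> precedes xval t j" by simp_all
  have "xval j \<le> xval t" if "j < n" for j
    using top[OF that] by (cases "j = t") (auto simp: precedes_def)
  then have "xmax = xval t"
    unfolding xmax_def using \<open>t < n\<close> by (intro Max_eqI) auto
  have fin: "finite (set_pmf (sample_pmf {..<n}))" by (simp add: finite_set_sample_pmf)
  show ?thesis
  proof (cases "{..<n} - {t} = {}")
    case True
    then have "\<And>j. j < n \<Longrightarrow> j \<noteq> t \<Longrightarrow> \<not> c j \<Longrightarrow> \<exists>s<n. c s \<and> precedes xval s j" for c by auto
    then have "(if c t then 0 else xval t) \<le> spa_welfare c" for c
      using spa_welfare_ge_top[OF \<open>t < n\<close> top] spa_welfare_nonneg by simp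
    then have "measure_pmf.expectation (sample_pmf {..<n}) (\<lambda>c. if c t then 0 else xval t) \<le>
        measure_pmf.expectation (sample_pmf {..<n}) spa_welfare"
      using fin by (intro expectation_mono_finite_pmf) auto
    then show ?thesis
      using expectation_unsampled[of "{..<n}" t] \<open>t < n\<close> \<open>xmax = xval t\<close> xval_nonneg[OF \<open>t < n\<close>] by simp
  next
    case False
    obtain s where "s \<in> {..<n} - {t}"
      and "\<And>j. j \<in> {..<n} - {t} \<Longrightarrow> j \<noteq> s \<Longrightarrow> precedes xval s j"
      by (rule precedes_first[of "{..<n} - {t}"]) (use False in auto)
    then have s: "s < n" "s \<noteq> t"
      and second: "\<And>j. j < n \<Longrightarrow> j \<noteq> t \<Longrightarrow> j \<noteq> s \<Longrightarrow> precedes xval s j" by simp_all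
    have "(if \<not> c t \<and> c s then xval t else 0) \<le> spa_welfare c" for c
      using spa_welfare_ge_top_runner_up[OF \<open>t < n\<close> top s(1) second, of c] spa_welfare_nonneg[of c] by auto
    then have "measure_pmf.expectation (sample_pmf {..<n}) (\<lambda>c. if \<not> c t \<and> c s then xval t else 0) \<le>
        measure_pmf.expectation (sample_pmf {..<n}) spa_welfare"
      using fin by (intro expectation_mono_finite_pmf) auto
    then show ?thesis
      using expectation_unsampled_sampled[of "{..<n}" t s] \<open>t < n\<close> s \<open>xmax = xval t\<close> by simp
  qed
qed

definition ppa_welfare :: "(nat \<Rightarrow> bool) \<Rightarrow> real" where
  "ppa_welfare c = (\<Sum>i<n. vs i (fst (ppa_outcome n m c bids) i))"

definition prefix_demand :: "nat \<Rightarrow> nat" where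
  "prefix_demand i = (\<Sum>k | k < n \<and> (precedes dens k i \<or> k = i). dem k)"

definition greedy_fit :: "nat set" where
  "greedy_fit = {i. i < n \<and> prefix_demand i \<le> m}"

definition greedy_small :: "nat set" where
  "greedy_small = {i \<in> greedy_fit. 2 * dem i \<le> m}"

text \<open>The competing demand bounds the units served before \<open>i\<close> and does not depend on whether
  \<open>i\<close> itself is sampled.\<close>

definition competing_demand :: "nat \<Rightarrow> (nat \<Rightarrow> bool) \<Rightarrow> real" where
  "competing_demand i = admitted_demand dens dem ({..<n} - {i}) m"

lemma ppa_demand_ahead_bids:
  assumes "j < n" "\<not> c i"
  shows "ppa_demand_ahead n c bids j = sample_demand_ahead dens dem ({..<n} - {i}) c j"
proof -
  have "{k. k \<in> {..<n} \<and> c k \<and> precedes (bid_density \<circ> bids) k j} =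
      {k. k \<in> {..<n} - {i} \<and> c k \<and> precedes dens k j}"
    using assms by (auto simp: precedes_def bid_density_bids)
  then show ?thesis
    unfolding ppa_demand_ahead_def sample_demand_ahead_def by (auto simp: bid_demand_bids intro: sum.cong)
qed

lemma ppa_used_le_competing_demand:
  assumes "i < n" "\<not> c i"
  shows "real (ppa_used n m c bids i) \<le> competing_demand i c"
proof -
  have "real (ppa_used n m c bids i) = (\<Sum>j<i. real (fst (ppa_outcome n m c bids) j))"
    by (simp flip: sum_ppa_alloc)
  also have "\<dots> \<le> (\<Sum>j<i. if \<not> c j \<and> real (sample_demand_ahead dens dem ({..<n} - {i}) c j) < m
      then real (dem j) else 0)"
  proof (intro sum_mono)
    fix j assume "j \<in> {..<i}"
    then have "j < n" using assms by simp
    then show "real (fst (ppa_outcome n m c bids) j) \<le> (if \<not> c j \<and> real (sample_demand_ahead dens dem ({..<n} - {i}) c j) < m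
      then real (dem j) else 0)"
      using ppa_demand_ahead_bids[of j c i, OF \<open>j < n\<close> assms(2)] bid_demand_bids[OF \<open>j < n\<close>]
      by (auto simp: ppa_outcome_def ppa_served_def ppa_eligible_def)
  qed
  also have "\<dots> \<le> competing_demand i c"
    unfolding competing_demand_def admitted_demand_def using assms by (intro sum_mono2) auto
  finally show ?thesis .
qed

lemma ppa_served_small:
  assumes "i \<in> greedy_small" "\<not> c i" and "2 * competing_demand i c \<le> m"
  shows "ppa_served n m c bids i"
proof -
  have i: "i < n" "prefix_demand i \<le> m" "2 * dem i \<le> m"
    using assms(1) by (auto simp: greedy_small_def greedy_fit_def)
  have "ppa_demand_ahead n c bids i + dem i \<le> prefix_demand i"
  proof -
    have "{k. k \<in> {..<n} - {i} \<and> c k \<and> precedes dens k i} \<subseteq> {k. k < n \<and> (precedes dens k i \<or> k = i)} - {i}"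
      by auto
    then have "ppa_demand_ahead n c bids i \<le> (\<Sum>k\<in>{k. k < n \<and> (precedes dens k i \<or> k = i)} - {i}. dem k)"
      unfolding ppa_demand_ahead_bids[of i c i, OF i(1) assms(2)] sample_demand_ahead_def by (intro sum_mono2) auto
    also have "\<dots> + dem i = prefix_demand i"
      unfolding prefix_demand_def using i(1) by (subst sum.remove[of _ i]) auto
    finally show ?thesis by simp
  qed
  then have "ppa_eligible n m c bids i"
    using i dem_bounds[OF i(1)] by (simp add: ppa_eligible_def)
  moreover have "ppa_used n m c bids i + bid_demand (bids i) \<le> m"
    using ppa_used_le_competing_demand[of i c, OF i(1) assms(2)] assms(3) i(3) bid_demand_bids[OF i(1)] by linarith
  ultimately show ?thesis using i(1) assms(2) by (simp add: ppa_served_def)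
qed

lemma ppa_welfare_ge:
  "(\<Sum>i\<in>greedy_small. xval i * (if c i then 0 else 1 - 2 * competing_demand i c / m)) \<le> ppa_welfare c"
proof -
  have small: "greedy_small \<subseteq> {..<n}" by (auto simp: greedy_small_def greedy_fit_def)
  have "xval i * (if c i then 0 else 1 - 2 * competing_demand i c / m) \<le> vs i (fst (ppa_outcome n m c bids) i)"
    if "i \<in> greedy_small" for i
  proof -
    have "i < n" using that small by auto
    consider "\<not> c i" "2 * competing_demand i c \<le> m" | "c i" | "m < 2 * competing_demand i c" by linarith
    then show ?thesis
    proof cases
      case 1
      then have "vs i (fst (ppa_outcome n m c bids) i) = xval i"
        using ppa_served_small[OF that] vs_eq[OF \<open>i < n\<close>] bid_demand_bids[OF \<open>i < n\<close>]
        by (simp add: ppa_outcome_def)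
      moreover have "0 \<le> competing_demand i c" by (simp add: competing_demand_def admitted_demand_nonneg)
      ultimately show ?thesis using 1 xval_nonneg[OF \<open>i < n\<close>] by (simp add: mult_left_le)
    next
      case 2
      then show ?thesis using vs_nonneg[OF \<open>i < n\<close>] by simp
    next
      case 3
      then have "1 - 2 * competing_demand i c / m \<le> 0" using supply_pos by (simp add: field_simps)
      from mult_nonneg_nonpos[OF xval_nonneg[OF \<open>i < n\<close>] this]
      show ?thesis using vs_nonneg[OF \<open>i < n\<close>, of "fst (ppa_outcome n m c bids) i"] by auto
    qed
  qed
  then have "(\<Sum>i\<in>greedy_small. xval i * (if c i then 0 else 1 - 2 * competing_demand i c / m)) \<le>
      (\<Sum>i\<in>greedy_small. vs i (fst (ppa_outcome n m c bids) i))"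
    by (rule sum_mono)
  also have "\<dots> \<le> ppa_welfare c"
    unfolding ppa_welfare_def using small by (intro sum_mono2) (auto simp: vs_nonneg)
  finally show ?thesis .
qed

text \<open>Bidder \<open>i\<close> is unsampled with probability \<open>1/10\<close>, independently of the competing demand,
  whose expectation is at most \<open>2m/9\<close>; and \<open>(1 - 4/9) / 10 = 1/18\<close>.\<close>

lemma expected_service_ge:
  assumes "i < n"
  shows "1/18 \<le> measure_pmf.expectation (sample_pmf {..<n}) (\<lambda>c. if c i then 0 else 1 - 2 * competing_demand i c / m)"
proof -
  define I where "I = {..<n} - {i}"
  define E where "E = measure_pmf.expectation (sample_pmf I) (competing_demand i)"
  have "E \<le> (real m + m) / 9"
    unfolding E_def I_def competing_demand_def using supply_pos dem_bounds
    by (intro expectation_admitted_demand_le) auto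
  have upd: "competing_demand i (c(i := y)) = competing_demand i c" for c y
    unfolding competing_demand_def by (rule admitted_demand_fun_upd) simp
  have "finite (set_pmf (sample_pmf I))" by (simp add: I_def finite_set_sample_pmf)
  then have "measure_pmf.expectation (sample_pmf {..<n}) (\<lambda>c. if c i then 0 else 1 - 2 * competing_demand i c / m) =
      (1 - 2 * E / m) / 10"
    using assms unfolding E_def
    by (subst expectation_sample_pmf_split[of _ i])
       (auto simp: upd I_def integrable_measure_pmf_finite Bochner_Integration.integral_diff)
  also have "1/18 \<le> (1 - 2 * E / m) / 10"
    using \<open>E \<le> (real m + m) / 9\<close> supply_pos by (simp add: field_simps)
  finally show ?thesis by simp
qed

lemma expected_ppa_welfare:
  "(\<Sum>i\<in>greedy_small. xval i) / 18 \<le> measure_pmf.expectation (sample_pmf {..<n}) ppa_welfare"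
proof -
  have small: "greedy_small \<subseteq> {..<n}" by (auto simp: greedy_small_def greedy_fit_def)
  have fin: "finite (set_pmf (sample_pmf {..<n}))" by (simp add: finite_set_sample_pmf)
  have "(\<Sum>i\<in>greedy_small. xval i) / 18 = (\<Sum>i\<in>greedy_small. xval i * (1/18))"
    by (simp add: sum_divide_distrib)
  also have "\<dots> \<le> (\<Sum>i\<in>greedy_small. xval i *
      measure_pmf.expectation (sample_pmf {..<n}) (\<lambda>c. if c i then 0 else 1 - 2 * competing_demand i c / m))"
    using small expected_service_ge xval_nonneg by (intro sum_mono mult_left_mono) auto
  also have "\<dots> = measure_pmf.expectation (sample_pmf {..<n})
      (\<lambda>c. \<Sum>i\<in>greedy_small. xval i * (if c i then 0 else 1 - 2 * competing_demand i c / m))"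
    using fin by (subst Bochner_Integration.integral_sum) (auto intro: integrable_measure_pmf_finite)
  also have "\<dots> \<le> measure_pmf.expectation (sample_pmf {..<n}) ppa_welfare"
    using fin ppa_welfare_ge by (intro expectation_mono_finite_pmf) auto
  finally show ?thesis .
qed

lemma greedy_fit_downward:
  assumes "i \<in> greedy_fit" "j < n" "precedes dens j i"
  shows "j \<in> greedy_fit"
proof -
  have "{k. k < n \<and> (precedes dens k j \<or> k = j)} \<subseteq> {k. k < n \<and> (precedes dens k i \<or> k = i)}"
    using assms(3) precedes_trans by blast
  then have "prefix_demand j \<le> prefix_demand i"
    unfolding prefix_demand_def by (intro sum_mono2) auto
  then show ?thesis using assms by (auto simp: greedy_fit_def)
qed

lemma greedy_fit_precedes_unfit:
  assumes "i \<in> greedy_fit" "j < n" "j \<notin> greedy_fit"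
  shows "precedes dens i j"
proof (rule ccontr)
  assume "\<not> precedes dens i j"
  moreover have "i \<noteq> j" using assms by auto
  ultimately have "precedes dens j i" using precedes_total by blast
  then show False using greedy_fit_downward assms by blast
qed

lemma sum_greedy_fit_le: "(\<Sum>i\<in>greedy_fit. xval i) \<le> (\<Sum>i\<in>greedy_small. xval i) + xmax"
proof -
  have "finite greedy_fit" by (simp add: greedy_fit_def)
  have pair: "dem a + dem b \<le> prefix_demand b" if "a < n" "b < n" "a \<noteq> b" "precedes dens a b" for a b
  proof -
    have "dem a + dem b = (\<Sum>k\<in>{a, b}. dem k)" using \<open>a \<noteq> b\<close> by simp
    also have "\<dots> \<le> prefix_demand b" unfolding prefix_demand_def using that by (intro sum_mono2) auto
    finally show ?thesis .
  qed
  have large_unique: "i = j" if "i \<in> greedy_fit - greedy_small" "j \<in> greedy_fit - greedy_small" for i j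
  proof (rule ccontr)
    assume "i \<noteq> j"
    moreover have "i < n" "j < n" using that by (auto simp: greedy_fit_def)
    ultimately have "dem i + dem j \<le> prefix_demand j \<or> dem j + dem i \<le> prefix_demand i"
      using pair[of i j] pair[of j i] precedes_total[of i j dens] by auto
    then show False using that by (auto simp: greedy_fit_def greedy_small_def)
  qed
  have "(\<Sum>i\<in>greedy_fit - greedy_small. xval i) \<le> xmax"
  proof (cases "greedy_fit - greedy_small = {}")
    case True
    show ?thesis unfolding True using xmax_nonneg by simp
  next
    case False
    then obtain i where "greedy_fit - greedy_small = {i}" using large_unique by blast
    then show ?thesis using xmax_ge by (auto simp: greedy_fit_def)
  qed
  moreover have "(\<Sum>i\<in>greedy_fit. xval i) = (\<Sum>i\<in>greedy_small. xval i) + (\<Sum>i\<in>greedy_fit - greedy_small. xval i)"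
    using \<open>finite greedy_fit\<close> by (subst sum.subset_diff[of greedy_small]) (auto simp: greedy_small_def)
  ultimately show ?thesis by simp
qed

lemma prefix_demand_first_unfit:
  assumes "f < n" "f \<notin> greedy_fit"
    and first: "\<And>j. j < n \<Longrightarrow> j \<notin> greedy_fit \<Longrightarrow> j \<noteq> f \<Longrightarrow> precedes dens f j"
  shows "prefix_demand f = (\<Sum>i\<in>greedy_fit. dem i) + dem f"
proof -
  have "{k. k < n \<and> (precedes dens k f \<or> k = f)} = insert f greedy_fit"
  proof (intro equalityI subsetI)
    fix k assume "k \<in> {k. k < n \<and> (precedes dens k f \<or> k = f)}"
    then show "k \<in> insert f greedy_fit" using first precedes_asym by blast
  next
    fix k assume "k \<in> insert f greedy_fit"
    then show "k \<in> {k. k < n \<and> (precedes dens k f \<or> k = f)}"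
      using greedy_fit_precedes_unfit[of k f] assms(1,2) by (auto simp: greedy_fit_def)
  qed
  moreover have "finite greedy_fit" by (simp add: greedy_fit_def)
  ultimately show ?thesis using assms(2) by (simp add: prefix_demand_def)
qed

text \<open>The fractional relaxation: the units a feasible set takes beyond the greedy prefix are worth
  at most the density of the first bidder that does not fit, and that bidder's prefix, of demand
  more than \<open>m\<close>, is worth at least its density per unit.\<close>

lemma sum_beyond_greedy_fit_le:
  assumes F: "F \<subseteq> {..<n}" and within_supply: "(\<Sum>i\<in>F. dem i) \<le> m"
    and f: "f < n" "f \<notin> greedy_fit"
    and first: "\<And>j. j < n \<Longrightarrow> j \<notin> greedy_fit \<Longrightarrow> j \<noteq> f \<Longrightarrow> precedes dens f j"
  shows "(\<Sum>i\<in>F - greedy_fit. xval i) \<le> (\<Sum>i\<in>greedy_fit. xval i) + xmax"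
proof -
  have below: "xval i \<le> dens f * dem i" if "i \<in> F - greedy_fit" for i
  proof -
    have "i < n" "i \<notin> greedy_fit" using that F by auto
    then have "dens i \<le> dens f" using first[of i] by (cases "i = f") (auto simp: precedes_def)
    then show ?thesis using xval_eq[OF \<open>i < n\<close>] by (auto intro: mult_right_mono)
  qed
  have above: "dens f * dem i \<le> xval i" if "i \<in> greedy_fit" for i
  proof -
    have "dens f \<le> dens i" using greedy_fit_precedes_unfit[OF that f] by (auto simp: precedes_def)
    then show ?thesis using that xval_eq[of i] by (auto simp: greedy_fit_def intro: mult_right_mono)
  qed
  have "(\<Sum>i\<in>F - greedy_fit. dem i) \<le> (\<Sum>i\<in>F. dem i)"
    using F finite_subset by (intro sum_mono2) auto
  also have "\<dots> \<le> prefix_demand f" using within_supply f by (auto simp: greedy_fit_def)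
  finally have beyond: "real (\<Sum>i\<in>F - greedy_fit. dem i) \<le> prefix_demand f" by linarith
  have "(\<Sum>i\<in>F - greedy_fit. xval i) \<le> (\<Sum>i\<in>F - greedy_fit. dens f * dem i)"
    using below by (rule sum_mono)
  also have "\<dots> = dens f * (\<Sum>i\<in>F - greedy_fit. dem i)"
    by (simp add: sum_distrib_left)
  also have "\<dots> \<le> dens f * prefix_demand f"
    using beyond dens_nonneg[OF f(1)] by (intro mult_left_mono) auto
  also have "\<dots> = (\<Sum>i\<in>greedy_fit. dens f * dem i) + xval f"
    using prefix_demand_first_unfit[OF f first] xval_eq[OF f(1)]
    by (simp add: sum_distrib_left distrib_left)
  also have "\<dots> \<le> (\<Sum>i\<in>greedy_fit. xval i) + xmax"
    using above xmax_ge[OF f(1)] by (intro add_mono sum_mono) auto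
  finally show ?thesis .
qed

lemma feasible_value_le:
  assumes F: "F \<subseteq> {..<n}" and within_supply: "(\<Sum>i\<in>F. dem i) \<le> m"
  shows "(\<Sum>i\<in>F. xval i) \<le> 2 * (\<Sum>i\<in>greedy_fit. xval i) + xmax"
proof -
  have "finite F" "finite greedy_fit" using F finite_subset by (auto simp: greedy_fit_def)
  have "(\<Sum>i\<in>F - greedy_fit. xval i) \<le> (\<Sum>i\<in>greedy_fit. xval i) + xmax"
  proof (cases "{..<n} \<subseteq> greedy_fit")
    case True
    then have "F - greedy_fit = {}" using F by auto
    moreover have "0 \<le> (\<Sum>i\<in>greedy_fit. xval i)"
      using xval_nonneg by (intro sum_nonneg) (auto simp: greedy_fit_def)
    ultimately show ?thesis using xmax_nonneg by (simp only: sum.empty)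
  next
    case False
    obtain f where "f \<in> {..<n} - greedy_fit"
      and "\<And>j. j \<in> {..<n} - greedy_fit \<Longrightarrow> j \<noteq> f \<Longrightarrow> precedes dens f j"
      by (rule precedes_first[of "{..<n} - greedy_fit"]) (use False in auto)
    then show ?thesis using sum_beyond_greedy_fit_le[OF F within_supply, of f] by simp
  qed
  moreover have "(\<Sum>i\<in>F \<inter> greedy_fit. xval i) \<le> (\<Sum>i\<in>greedy_fit. xval i)"
    using \<open>finite greedy_fit\<close> xval_nonneg by (intro sum_mono2) (auto simp: greedy_fit_def)
  moreover have "(\<Sum>i\<in>F. xval i) = (\<Sum>i\<in>F \<inter> greedy_fit. xval i) + (\<Sum>i\<in>F - greedy_fit. xval i)"
    using \<open>finite F\<close> by (rule sum.Int_Diff)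
  ultimately show ?thesis by simp
qed

lemma opt_welfare_le: "opt_welfare n m vs \<le> 2 * (\<Sum>i\<in>greedy_small. xval i) + 3 * xmax"
proof -
  have "opt_welfare n m vs \<le> 2 * (\<Sum>i\<in>greedy_fit. xval i) + xmax"
    unfolding opt_welfare_def
  proof (rule cSup_least)
    have "(\<Sum>i<n. vs i ((\<lambda>_. 0) i)) \<in> {\<Sum>i<n. vs i (q i) |q. sum q {..<n} \<le> m}"
      unfolding mem_Collect_eq by (rule exI[of _ "\<lambda>_. 0"]) simp
    then show "{\<Sum>i<n. vs i (q i) |q. sum q {..<n} \<le> m} \<noteq> {}" by blast
  next
    fix s assume "s \<in> {\<Sum>i<n. vs i (q i) |q. sum q {..<n} \<le> m}"
    then obtain q where s: "s = (\<Sum>i<n. vs i (q i))" and q: "sum q {..<n} \<le> m" by blast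
    define F where "F = {i \<in> {..<n}. dem i \<le> q i}"
    have "s = (\<Sum>i<n. if dem i \<le> q i then xval i else 0)"
      unfolding s using vs_eq by (intro sum.cong) auto
    also have "\<dots> = (\<Sum>i\<in>F. xval i)"
      unfolding F_def by (rule sum.inter_filter[symmetric]) simp
    finally have "s = (\<Sum>i\<in>F. xval i)" .
    moreover have "(\<Sum>i\<in>F. dem i) \<le> m"
    proof -
      have "(\<Sum>i\<in>F. dem i) \<le> (\<Sum>i\<in>F. q i)" by (intro sum_mono) (simp add: F_def)
      also have "\<dots> \<le> sum q {..<n}" by (intro sum_mono2) (auto simp: F_def)
      finally show ?thesis using q by linarith
    qed
    ultimately show "s \<le> 2 * (\<Sum>i\<in>greedy_fit. xval i) + xmax"
      using feasible_value_le[of F] by (auto simp: F_def)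
  qed
  then show ?thesis using sum_greedy_fit_le by simp
qed

lemma opt_welfare_le_expected:
  "opt_welfare n m vs \<le> 400 * (1/2 * measure_pmf.expectation (sample_pmf {..<n}) spa_welfare +
     1/2 * measure_pmf.expectation (sample_pmf {..<n}) ppa_welfare)"
proof -
  have "0 \<le> (\<Sum>i\<in>greedy_small. xval i)"
    using xval_nonneg by (intro sum_nonneg) (auto simp: greedy_small_def greedy_fit_def)
  then show ?thesis unfolding distrib_left
    using opt_welfare_le expected_spa_welfare expected_ppa_welfare xmax_nonneg by linarith
qed

lemma welfare_spa_mech: "welfare n (spa_mech n m c) (truthful_strategy m) vs = spa_welfare c"
  unfolding spa_mech_def spa_welfare_def by (rule welfare_samples_first)

lemma welfare_ppa_mech: "welfare n (ppa_mech n m c) (truthful_strategy m) vs = ppa_welfare c"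
  unfolding ppa_mech_def ppa_welfare_def by (rule welfare_samples_first)

end

definition auction :: "nat \<Rightarrow> nat \<Rightarrow> (msg mech \<times> (nat \<Rightarrow> msg strategy)) pmf" where
  "auction n m = bernoulli_pmf (1/2) \<bind> (\<lambda>b. map_pmf
     (\<lambda>c. (if b then spa_mech n m c else ppa_mech n m c, truthful_strategy m)) (sample_pmf {..<n}))"

lemma OSP_auction: "\<forall>(T, S) \<in> set_pmf (auction n m). det_mech n m T S \<and> OSP n m T S"
  by (auto simp: auction_def OSP_spa_mech OSP_ppa_mech)

lemma expected_welfare_auction:
  "measure_pmf.expectation (auction n m) (\<lambda>(T, S). welfare n T S vs) =
     1/2 * measure_pmf.expectation (sample_pmf {..<n}) (\<lambda>c. welfare n (spa_mech n m c) (truthful_strategy m) vs) +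
     1/2 * measure_pmf.expectation (sample_pmf {..<n}) (\<lambda>c. welfare n (ppa_mech n m c) (truthful_strategy m) vs)"
  unfolding auction_def
  by (subst pmf_expectation_bind[of UNIV]) (auto simp: finite_set_sample_pmf UNIV_bool)

theorem theorem3p2:
  fixes n m :: nat
  shows "\<exists>D :: (msg mech \<times> (nat \<Rightarrow> msg strategy)) pmf.
     (\<forall>(T, S) \<in> set_pmf D. det_mech n m T S \<and> OSP n m T S) \<and>
     (\<forall>vs. (\<forall>i<n. single_minded m (vs i)) \<longrightarrow>
        opt_welfare n m vs \<le> 400 * measure_pmf.expectation D (\<lambda>(T, S). welfare n T S vs))"
proof (intro exI[of _ "auction n m"] conjI allI impI)
  show "\<forall>(T, S) \<in> set_pmf (auction n m). det_mech n m T S \<and> OSP n m T S"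
    by (rule OSP_auction)
  fix vs assume vs: "\<forall>i<n. single_minded m (vs i)"
  show "opt_welfare n m vs \<le> 400 * measure_pmf.expectation (auction n m) (\<lambda>(T, S). welfare n T S vs)"
  proof (cases "n = 0")
    case True
    then show ?thesis by (simp add: opt_welfare_def welfare_def)
  next
    case False
    then interpret single_minded_profile n m vs using vs by unfold_locales auto
    show ?thesis
      using opt_welfare_le_expected by (simp add: expected_welfare_auction welfare_spa_mech welfare_ppa_mech)
  qed
qed

end
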